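(* Let $\mathbf X=\{X_n\}$ and $\mathbf Y=\{Y_n\}$ be general sources such that $$\inf_{0<\epsilon<1}\ \liminf_{n\to\infty}\ \inf_{0\le\delta<1-\epsilon}\{c_n^x(\delta+\epsilon)-c_n^y(\delta)\}\ \ge 0 .$$ Then there exist joint pmfs $P_{X_nY_n}$ with marginals $P_{X_n}$ and $P_{Y_n}$, for each $n$, such that for every $\gamma>0$ $$\lim_{n\to\infty}P_{X_nY_n}\Big\{\tfrac1n\log\tfrac{1}{P_{X_n}(X_n)}-\tfrac1n\log\tfrac{1}{P_{Y_n}(Y_n)}<-\gamma\Big\}=0 .$$ In other words, $\text{p-}\liminf_{n\to\infty}\{\frac1n\log\frac{1}{P_{X_n}(X_n)}-\frac1n\log\frac{1}{P_{Y_n}(Y_n)}\}\ge0$ under $P_{X_nY_n}$.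
   Context: Logarithms are natural. A general source $\mathbf X=\{X_n\}_{n\ge1}$ is a sequence of random variables, $X_n$ taking values in a countable set $\mathcal X_n$, with no consistency requirements between different $n$. Similarly $Y_n$ takes values in a countable set $\mathcal Y_n$. For a random variable $Z$ on a countable set $\mathcal Z$ with pmf $P_Z$, list the elements of positive probability as $z_1,z_2,\dots$ (a finite or countably infinite list) with $P_Z(z_1)\ge P_Z(z_2)\ge\cdots$ (ties broken arbitrarily). Set $\delta_0=0$ and $\delta_k=\sum_{i\le k}P_Z(z_i)$. For $\delta\in[0,1)$ define $c^z(\delta)=\log\frac{1}{P_Z(z_k)}$, where $k$ is the unique index with $\delta\in[\delta_{k-1},\delta_k)$. Here $c_n^x$ and $c_n^y$ denote this function built from $P_{X_n}$ and from $P_{Y_n}$ respectively. *)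

theory Defs
  imports "HOL-Probability.Probability"
begin

definition sorted_enum :: "'a pmf \<Rightarrow> enat \<Rightarrow> (nat \<Rightarrow> 'a) \<Rightarrow> bool" where
  "sorted_enum P K z \<longleftrightarrow>
     bij_betw z {k. enat k < K} (set_pmf P) \<and>
     (\<forall>i j. enat j < K \<longrightarrow> i \<le> j \<longrightarrow> pmf P (z j) \<le> pmf P (z i))"

text \<open>The function c(delta) built from a pmf: with delta_k the partial sums
  (0-based indexing: the k-th element z k covers [sum_{i<k}, sum_{i<=k})),
  c(delta) = ln (1 / P(z k)) for the unique k with delta in that interval.
  Ties are broken by an arbitrary (Hilbert-chosen) sorted listing.\<close>
definition cfun :: "'a pmf \<Rightarrow> real \<Rightarrow> real" where
  "cfun P \<delta> =
    (let Kz = (SOME Kz. sorted_enum P (fst Kz) (snd Kz)); K = fst Kz; z = snd Kz in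
     ln (1 / pmf P (z (THE k. enat k < K \<and> (\<Sum>i<k. pmf P (z i)) \<le> \<delta>
                                      \<and> \<delta> < (\<Sum>i<Suc k. pmf P (z i))))))"

end

theory Submission
  imports Defs
begin

text \<open>
  Couple X and Y through one uniform variable U on [0,1):
  Y is the quantile of P_Y at U and X is the quantile of P_X at U + e, taken modulo 1.
  The quantile function of a pmf is defined from the same sorted listing of its support
  that defines cfun, so that cfun P u = ln (1 / P (quantile P u)); a rotation of [0,1)
  preserves Lebesgue measure, so both marginals are correct. Off the event U \<ge> 1 - e,
  which has probability e, the self-information difference equals
  cfun_X (U + e) - cfun_Y U, which the hypothesis bounds from below for large n.
\<close>

lemma finite_pmf_ge:
  fixes P :: "'a pmf" assumes c: "c > 0"
  shows "finite {y. pmf P y \<ge> c}"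
proof (rule ccontr)
  assume inf: "infinite {y. pmf P y \<ge> c}"
  obtain n :: nat where n: "real n > 1 / c" using reals_Archimedean2 by blast
  obtain B where B: "finite B" "card B = n" "B \<subseteq> {y. pmf P y \<ge> c}"
    using infinite_arbitrarily_large[OF inf] by blast
  have "real n * c \<le> sum (pmf P) B"
    using sum_bounded_below[of B c "pmf P"] B by auto
  also have "\<dots> = measure P B" using B by (simp add: measure_measure_pmf_finite)
  also have "\<dots> \<le> 1" by simp
  finally have "real n * c \<le> 1" .
  moreover have "real n * c > 1" using n c by (simp add: field_simps)
  ultimately show False by simp
qed

text \<open>A set strictly totally ordered so that every element has only finitely many
  predecessors can be listed increasingly, indexed by an initial segment of \<nat>:
  list it by the rank (number of predecessors) of its elements.\<close>
lemma finite_prefix_enumeration: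
  fixes lt :: "'a \<Rightarrow> 'a \<Rightarrow> bool"
  assumes irrefl: "\<And>x. \<not> lt x x"
    and trans: "\<And>x y w. lt x y \<Longrightarrow> lt y w \<Longrightarrow> lt x w"
    and total: "\<And>x y. x \<in> S \<Longrightarrow> y \<in> S \<Longrightarrow> x \<noteq> y \<Longrightarrow> lt x y \<or> lt y x"
    and fin: "\<And>x. x \<in> S \<Longrightarrow> finite {y\<in>S. lt y x}"
  shows "\<exists>K z. bij_betw z {k. enat k < K} S \<and> (\<forall>i j. enat j < K \<longrightarrow> i < j \<longrightarrow> lt (z i) (z j))"
proof -
  define r where "r x = card {y\<in>S. lt y x}" for x
  have r_mono: "r x < r y" if "x \<in> S" "y \<in> S" "lt x y" for x y
  proof -
    have "{w\<in>S. lt w x} \<subset> {w\<in>S. lt w y}"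
      using that irrefl trans by blast
    then show ?thesis unfolding r_def using fin[OF that(2)] by (simp add: psubset_card_mono)
  qed
  have r_inj: "inj_on r S"
    unfolding inj_on_def using total r_mono by (metis less_irrefl)
  define R where "R = r ` S"
  have r_bij: "bij_betw r S R" using r_inj unfolding R_def by (simp add: bij_betw_imageI)
  define K where "K = (if finite R then enat (card R) else \<infinity>)"
  have support_enum_bij: "bij_betw (enumerate R) {k. enat k < K} R"
  proof (cases "finite R")
    case True
    then have "{k. enat k < K} = {..<card R}" unfolding K_def by auto
    then show ?thesis using finite_bij_enumerate[OF True] by simp
  next
    case False
    then show ?thesis using bij_enumerate[OF False] unfolding K_def by simp
  qed
  have enum_mono: "enumerate R i < enumerate R j" if "i < j" "enat j < K" for i j
    using that finite_enumerate_mono[OF that(1)] enumerate_mono[OF that(1)]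
    unfolding K_def by (cases "finite R") auto
  define z where "z = inv_into S r \<circ> enumerate R"
  have z_bij: "bij_betw z {k. enat k < K} S"
    unfolding z_def using support_enum_bij bij_betw_inv_into[OF r_bij] by (rule bij_betw_trans)
  have r_z: "r (z k) = enumerate R k" if "enat k < K" for k
  proof -
    have "enumerate R k \<in> r ` S" using support_enum_bij that unfolding R_def bij_betw_def by blast
    then show ?thesis unfolding z_def by (simp add: f_inv_into_f)
  qed
  have "lt (z i) (z j)" if "enat j < K" "i < j" for i j
  proof -
    have iK: "enat i < K" using that by (meson enat_ord_simps(2) order.strict_trans)
    have "z i \<in> S" "z j \<in> S" using z_bij iK that(1) unfolding bij_betw_def by auto
    moreover have "r (z i) < r (z j)" using enum_mono[OF that(2,1)] r_z[OF iK] r_z[OF that(1)] by simp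
    moreover have "z i \<noteq> z j" using calculation by auto
    ultimately show ?thesis using total r_mono by (meson less_asym)
  qed
  then show ?thesis using z_bij by blast
qed

text \<open>Every pmf admits a listing of its support by non-increasing probability
  (so the choice made in the definition of cfun is meaningful). Ties are broken by
  an injection of the countable support into \<nat>.\<close>
lemma sorted_enum_exists: "\<exists>K z. sorted_enum P K z"
proof -
  define t where "t = to_nat_on (set_pmf P)"
  have t_inj: "inj_on t (set_pmf P)" unfolding t_def by auto
  define lt where "lt x y \<longleftrightarrow> pmf P x > pmf P y \<or> (pmf P x = pmf P y \<and> t x < t y)" for x y
  have "finite {y\<in>set_pmf P. lt y x}" if "x \<in> set_pmf P" for x
  proof (rule finite_subset)
    show "{y\<in>set_pmf P. lt y x} \<subseteq> {y. pmf P y \<ge> pmf P x}" unfolding lt_def by auto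
    show "finite {y. pmf P y \<ge> pmf P x}" using that by (intro finite_pmf_ge) (simp add: pmf_positive)
  qed
  moreover have "lt x y \<or> lt y x" if "x \<in> set_pmf P" "y \<in> set_pmf P" "x \<noteq> y" for x y
    using that t_inj unfolding lt_def inj_on_def by (metis linorder_neqE_nat linorder_neqE_linordered_idom)
  ultimately obtain K z where z: "bij_betw z {k. enat k < K} (set_pmf P)"
      and z_lt: "\<forall>i j. enat j < K \<longrightarrow> i < j \<longrightarrow> lt (z i) (z j)"
    using finite_prefix_enumeration[of lt "set_pmf P"] unfolding lt_def by fastforce
  have "pmf P (z j) \<le> pmf P (z i)" if "enat j < K" "i \<le> j" for i j
  proof (cases "i = j")
    case False
    then show ?thesis using z_lt that unfolding lt_def by (metis le_neq_implies_less less_eq_real_def)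
  qed simp
  then show ?thesis using z unfolding sorted_enum_def by blast
qed

definition support_len :: "'a pmf \<Rightarrow> enat" where
  "support_len P = fst (SOME Kz. sorted_enum P (fst Kz) (snd Kz))"

definition support_enum :: "'a pmf \<Rightarrow> nat \<Rightarrow> 'a" where
  "support_enum P = snd (SOME Kz. sorted_enum P (fst Kz) (snd Kz))"

lemma support_enum_sorted: "sorted_enum P (support_len P) (support_enum P)"
proof -
  have "\<exists>Kz. sorted_enum P (fst Kz) (snd Kz)" using sorted_enum_exists[of P] by auto
  then show ?thesis unfolding support_len_def support_enum_def by (rule someI_ex)
qed

lemma support_enum_bij: "bij_betw (support_enum P) {k. enat k < support_len P} (set_pmf P)"
  using support_enum_sorted unfolding sorted_enum_def by blast

text \<open>The partial sums delta_k of the listed probabilities; the k-th element of the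
  listing owns the cell [cum P k, cum P (k+1)) of the unit interval.\<close>
definition cum :: "'a pmf \<Rightarrow> nat \<Rightarrow> real" where
  "cum P k = (\<Sum>i<k. pmf P (support_enum P i))"

lemma cum_mono: "k \<le> j \<Longrightarrow> cum P k \<le> cum P j"
  unfolding cum_def by (rule sum_mono2) auto

lemma cum_Suc: "cum P (Suc k) - cum P k = pmf P (support_enum P k)"
  unfolding cum_def by simp

lemma cum_eq_measure:
  assumes "enat m \<le> support_len P"
  shows "cum P m = measure P (support_enum P ` {..<m})"
proof -
  have "inj_on (support_enum P) {..<m}"
    using support_enum_bij assms unfolding bij_betw_def
    by (rule_tac inj_on_subset[of _ "{k. enat k < support_len P}"])
       (auto, metis enat_ord_simps(2) order.strict_trans2)
  then show ?thesis unfolding cum_def by (simp add: measure_measure_pmf_finite sum.reindex)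
qed

lemma cum_le_1: "enat m \<le> support_len P \<Longrightarrow> cum P m \<le> 1"
  by (simp add: cum_eq_measure)

lemma cum_exceeds:
  assumes v: "v < 1"
  shows "\<exists>m. enat m \<le> support_len P \<and> v < cum P m"
proof (cases "support_len P")
  case (enat n)
  have "support_enum P ` {..<n} = set_pmf P"
    using support_enum_bij[of P] unfolding bij_betw_def enat by auto
  then have "cum P n = 1"
    using cum_eq_measure[of n P] enat by (simp add: measure_pmf.prob_eq_1 AE_measure_pmf)
  then show ?thesis using v enat by (intro exI[of _ n]) auto
next
  case infinity
  have bij: "bij_betw (support_enum P) UNIV (set_pmf P)"
    using support_enum_bij[of P] infinity by simp
  have "(\<integral>\<^sup>+i. ennreal (pmf P (support_enum P i)) \<partial>count_space UNIV)
          = (\<integral>\<^sup>+x. ennreal (pmf P x) \<partial>count_space (set_pmf P))"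
    by (rule nn_integral_bij_count_space[OF bij])
  also have "\<dots> = emeasure P (set_pmf P)" by (rule nn_integral_pmf)
  also have "\<dots> = 1" by (simp add: measure_pmf.emeasure_eq_1_AE AE_measure_pmf)
  finally have "(\<Sum>i. ennreal (pmf P (support_enum P i))) = 1"
    by (simp add: nn_integral_count_space_nat)
  then have "(\<lambda>i. ennreal (pmf P (support_enum P i))) sums ennreal 1"
    by (metis ennreal_1 summable_sums summableI)
  then have "(\<lambda>i. pmf P (support_enum P i)) sums 1"
    using sums_ennreal[of "\<lambda>i. pmf P (support_enum P i)" 1] by simp
  then have "cum P \<longlonglongrightarrow> 1" unfolding cum_def by (simp add: sums_def)
  then have "eventually (\<lambda>m. v < cum P m) sequentially" using v by (rule order_tendstoD)
  then obtain m where "v < cum P m" by (meson eventually_sequentially order_refl)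
  then show ?thesis using infinity by auto
qed

definition in_cell :: "'a pmf \<Rightarrow> nat \<Rightarrow> real \<Rightarrow> bool" where
  "in_cell P k v \<longleftrightarrow> enat k < support_len P \<and> cum P k \<le> v \<and> v < cum P (Suc k)"

lemma in_cell_unique:
  assumes "in_cell P k v" "in_cell P j v" shows "k = j"
proof (rule ccontr)
  assume "k \<noteq> j"
  then have "Suc k \<le> j \<or> Suc j \<le> k" by auto
  then show False using assms cum_mono[of "Suc k" j P] cum_mono[of "Suc j" k P]
    unfolding in_cell_def by auto
qed

text \<open>The cells partition [0,1): the cell containing v is the one just below the
  first partial sum exceeding v.\<close>
lemma in_cell_exists:
  assumes v: "0 \<le> v" "v < 1"
  shows "\<exists>k. in_cell P k v"
proof -
  obtain m where m: "enat m \<le> support_len P" "v < cum P m" using cum_exceeds[OF v(2)] by blast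
  define j where "j = (LEAST j. v < cum P j)"
  have j: "v < cum P j" unfolding j_def by (rule LeastI[of _ m]) (rule m(2))
  have jm: "j \<le> m" unfolding j_def by (rule Least_le) (rule m(2))
  have "j \<noteq> 0" using j v by (intro notI) (simp add: cum_def)
  then obtain k where k: "j = Suc k" by (cases j) auto
  have "\<not> v < cum P k" using k unfolding j_def by (metis lessI not_less_Least)
  moreover have "enat k < support_len P" using jm k m(1)
    by (metis Suc_le_eq enat_ord_simps(2) order.strict_trans2)
  ultimately show ?thesis using j k unfolding in_cell_def by (intro exI[of _ k]) auto
qed

definition cell_index :: "'a pmf \<Rightarrow> real \<Rightarrow> nat" where
  "cell_index P v = (THE k. in_cell P k v)"

definition quantile :: "'a pmf \<Rightarrow> real \<Rightarrow> 'a" where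
  "quantile P v = support_enum P (cell_index P v)"

lemma cell_index_eq: "in_cell P k v \<Longrightarrow> cell_index P v = k"
  unfolding cell_index_def using in_cell_unique by blast

lemma in_cell_index: "0 \<le> v \<Longrightarrow> v < 1 \<Longrightarrow> in_cell P (cell_index P v) v"
  using in_cell_exists cell_index_eq by metis

lemma cfun_eq_quantile: "cfun P v = ln (1 / pmf P (quantile P v))"
  unfolding cfun_def quantile_def cell_index_def in_cell_def cum_def
    support_enum_def support_len_def Let_def
  by (rule refl)

lemma quantile_in_support: "0 \<le> v \<Longrightarrow> v < 1 \<Longrightarrow> quantile P v \<in> set_pmf P"
  using in_cell_index[of v P] support_enum_bij[of P]
  unfolding quantile_def in_cell_def bij_betw_def by auto

text \<open>The cell index is piecewise constant on intervals, hence Borel measurable.\<close>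
lemma cell_index_measurable: "cell_index P \<in> borel \<rightarrow>\<^sub>M count_space UNIV"
  unfolding cell_index_def
  by (rule measurable_THE[where I=UNIV]) (auto simp: in_cell_def intro: in_cell_unique)

lemma quantile_preimage:
  assumes "x \<in> set_pmf P"
  obtains a b where "0 \<le> a" "a \<le> b" "b \<le> 1" "b - a = pmf P x"
    "\<And>v. 0 \<le> v \<Longrightarrow> v < 1 \<Longrightarrow> quantile P v = x \<longleftrightarrow> v \<in> {a..<b}"
proof -
  obtain k where k: "enat k < support_len P" "support_enum P k = x"
  proof -
    have "x \<in> support_enum P ` {k. enat k < support_len P}"
      using assms support_enum_bij[of P] by (simp add: bij_betw_def)
    then show ?thesis using that by blast
  qed
  have pre: "quantile P v = x \<longleftrightarrow> v \<in> {cum P k..<cum P (Suc k)}" if "0 \<le> v" "v < 1" for v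
  proof
    assume "quantile P v = x"
    moreover have cell: "in_cell P (cell_index P v) v" using in_cell_index[OF that] .
    ultimately have "support_enum P (cell_index P v) = support_enum P k"
        "enat (cell_index P v) < support_len P"
      using k unfolding quantile_def in_cell_def by simp_all
    then have "cell_index P v = k"
      using k(1) inj_onD[OF bij_betw_imp_inj_on[OF support_enum_bij[of P]]] by blast
    then show "v \<in> {cum P k..<cum P (Suc k)}" using cell by (simp add: in_cell_def)
  next
    assume "v \<in> {cum P k..<cum P (Suc k)}"
    then have "cell_index P v = k" using k by (intro cell_index_eq) (simp add: in_cell_def)
    then show "quantile P v = x" using k by (simp add: quantile_def)
  qed
  show ?thesis
  proof (rule that[OF _ _ _ _ pre])
    show "0 \<le> cum P k" unfolding cum_def by (simp add: sum_nonneg)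
    show "cum P k \<le> cum P (Suc k)" by (rule cum_mono) simp
    show "cum P (Suc k) \<le> 1" using k(1) by (intro cum_le_1) (simp add: Suc_ile_eq)
    show "cum P (Suc k) - cum P k = pmf P x" using k by (simp add: cum_Suc)
  qed
qed

lemma quantile_transform:
  assumes g_len: "\<And>a b. 0 \<le> a \<Longrightarrow> a \<le> b \<Longrightarrow> b \<le> 1 \<Longrightarrow>
                    measure lborel {v\<in>{0..<1}. g v \<in> {a..<b}} = b - a"
    and g_range: "\<And>v. v \<in> {0..<1} \<Longrightarrow> g v \<in> {0..<1::real}"
  shows "measure lborel {v\<in>{0..<1}. quantile P (g v) = x} = pmf P x"
proof (cases "x \<in> set_pmf P")
  case False
  then have empty: "{v\<in>{0..<1}. quantile P (g v) = x} = {}"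
    using quantile_in_support g_range by fastforce
  show ?thesis unfolding empty using False by (simp add: set_pmf_iff)
next
  case True
  obtain a b where ab: "0 \<le> a" "a \<le> b" "b \<le> 1" "b - a = pmf P x"
    and pre: "\<And>v. 0 \<le> v \<Longrightarrow> v < 1 \<Longrightarrow> quantile P v = x \<longleftrightarrow> v \<in> {a..<b}"
    using quantile_preimage[OF True] by blast
  have "{v\<in>{0..<1}. quantile P (g v) = x} = {v\<in>{0..<1}. g v \<in> {a..<b}}"
    using pre g_range by auto
  then show ?thesis using g_len[OF ab(1-3)] ab(4) by simp
qed

definition circ_shift :: "real \<Rightarrow> real \<Rightarrow> real" where
  "circ_shift e v = (if v < 1 - e then v + e else v - (1 - e))"

lemma circ_shift_measurable: "circ_shift e \<in> borel_measurable borel"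
  unfolding circ_shift_def by measurable

lemma circ_shift_range: "0 < e \<Longrightarrow> e < 1 \<Longrightarrow> v \<in> {0..<1} \<Longrightarrow> circ_shift e v \<in> {0..<1}"
  unfolding circ_shift_def by auto

text \<open>The preimage of [a,b) under the rotation is one interval or two pieces of
  total length b - a.\<close>
lemma circ_shift_preimage_length:
  assumes e: "0 < e" "e < 1" and ab: "0 \<le> a" "a \<le> b" "b \<le> 1"
  shows "measure lborel {v\<in>{0..<1::real}. circ_shift e v \<in> {a..<b}} = b - a"
proof -
  consider "b \<le> e" | "e \<le> a" | "a < e" "e < b" by linarith
  then show ?thesis
  proof cases
    case 1
    then have "{v\<in>{0..<1::real}. circ_shift e v \<in> {a..<b}} = {a+1-e..<b+1-e}"
      using e ab unfolding circ_shift_def by auto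
    then show ?thesis using ab by simp
  next
    case 2
    then have "{v\<in>{0..<1::real}. circ_shift e v \<in> {a..<b}} = {a-e..<b-e}"
      using e ab unfolding circ_shift_def by auto
    then show ?thesis using ab by simp
  next
    case 3
    then have "{v\<in>{0..<1::real}. circ_shift e v \<in> {a..<b}} = {0..<b-e} \<union> {a+1-e..<1}"
      using e ab unfolding circ_shift_def by auto
    moreover have "measure lborel ({0..<b-e} \<union> {a+1-e..<1}) = (b - e) + (1 - (a+1-e))"
      using 3 e ab by (subst measure_Union) auto
    ultimately show ?thesis by simp
  qed
qed

lemma pmf_of_unit_interval:
  fixes h :: "real \<Rightarrow> 'c"
  assumes h: "h \<in> borel \<rightarrow>\<^sub>M count_space UNIV"
    and C: "countable C" "\<And>u. u \<in> {0..<1} \<Longrightarrow> h u \<in> C"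
  shows "\<exists>J. \<forall>A. measure_pmf.prob J A = measure lborel ({0..<1} \<inter> h -` A)"
proof -
  define U where "U = uniform_measure lborel {0..<1::real}"
  have U: "prob_space U" unfolding U_def by (rule prob_space_uniform_measure) auto
  have hU: "h \<in> U \<rightarrow>\<^sub>M count_space UNIV" using h unfolding U_def by simp
  define N where "N = distr U (count_space UNIV) h"
  have N: "prob_space N" unfolding N_def using prob_space.prob_space_distr[OF U hU] .
  have sN: "sets N = UNIV" unfolding N_def by simp
  have "AE u in U. h u \<in> C" unfolding U_def by (intro AE_uniform_measureI AE_I2) (auto intro: C(2))
  then have "AE x in N. x \<in> C" unfolding N_def by (subst AE_distr_iff[OF hU]) auto
  then have "AE x in N. measure N {x} \<noteq> 0"
    using finite_measure.AE_support_countable[OF prob_space.finite_measure[OF N] sN] C(1) by blast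
  then have JN: "measure_pmf (Abs_pmf N) = N" using N sN by (subst Abs_pmf_inverse) auto
  have "measure_pmf.prob (Abs_pmf N) A = measure lborel ({0..<1} \<inter> h -` A)" for A
  proof -
    have "measure N A = measure U (h -` A \<inter> space U)"
      unfolding N_def by (rule measure_distr[OF hU]) simp
    also have "\<dots> = measure lborel ({0..<1} \<inter> h -` A)"
      using measurable_sets[OF h, of A] unfolding U_def by simp
    finally show ?thesis unfolding JN .
  qed
  then show ?thesis by blast
qed

text \<open>Lebesgue measure of a subinterval of [0,1): the identity map qualifies for the
  quantile transform.\<close>
lemma unit_subinterval_length:
  assumes "0 \<le> a" "a \<le> b" "b \<le> 1"
  shows "measure lborel {v\<in>{0..<1::real}. v \<in> {a..<b}} = b - a"
proof -
  have "{v\<in>{0..<1::real}. v \<in> {a..<b}} = {a..<b}" using assms by auto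
  then show ?thesis using assms by simp
qed

definition shifted_quantiles :: "'a pmf \<Rightarrow> 'b pmf \<Rightarrow> real \<Rightarrow> real \<Rightarrow> 'a \<times> 'b" where
  "shifted_quantiles PX PY e u = (quantile PX (circ_shift e u), quantile PY u)"

text \<open>Measurability goes through the pair of cell indices, which ranges over the
  countable type nat \<times> nat.\<close>
lemma shifted_quantiles_measurable:
  "shifted_quantiles PX PY e \<in> borel \<rightarrow>\<^sub>M count_space UNIV"
proof -
  have [measurable]: "cell_index PX \<in> borel \<rightarrow>\<^sub>M count_space UNIV"
      "cell_index PY \<in> borel \<rightarrow>\<^sub>M count_space UNIV" "circ_shift e \<in> borel_measurable borel"
    by (rule cell_index_measurable circ_shift_measurable)+
  define g where "g u = (cell_index PX (circ_shift e u), cell_index PY u)" for u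
  have "g \<in> borel \<rightarrow>\<^sub>M count_space UNIV"
  proof (subst measurable_count_space_eq2_countable, safe)
    fix a b
    have "g -` {(a, b)} \<inter> space borel
        = {u. cell_index PX (circ_shift e u) = a} \<inter> {u. cell_index PY u = b}"
      unfolding g_def by auto
    also have "\<dots> \<in> sets borel" by measurable
    finally show "g -` {(a, b)} \<inter> space borel \<in> sets borel" .
  qed auto
  then have "(\<lambda>(k, j). (support_enum PX k, support_enum PY j)) \<circ> g \<in> borel \<rightarrow>\<^sub>M count_space UNIV"
    by (rule measurable_comp) simp
  moreover have "(\<lambda>(k, j). (support_enum PX k, support_enum PY j)) \<circ> g = shifted_quantiles PX PY e"
    unfolding g_def shifted_quantiles_def quantile_def by auto
  ultimately show ?thesis by simp
qed

lemma shifted_quantiles_law: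
  assumes e: "0 < e" "e < 1"
  shows "\<exists>J. \<forall>A. measure_pmf.prob J A = measure lborel ({0..<1} \<inter> shifted_quantiles PX PY e -` A)"
proof (rule pmf_of_unit_interval[OF shifted_quantiles_measurable])
  show "countable (set_pmf PX \<times> set_pmf PY)" by simp
  show "shifted_quantiles PX PY e u \<in> set_pmf PX \<times> set_pmf PY" if "u \<in> {0..<1}" for u
    using circ_shift_range[OF e that] that unfolding shifted_quantiles_def
    by (auto intro!: quantile_in_support)
qed

lemma shifted_quantiles_marginals:
  assumes e: "0 < e" "e < 1"
    and J: "\<And>A. measure_pmf.prob J A = measure lborel ({0..<1} \<inter> shifted_quantiles PX PY e -` A)"
  shows "map_pmf fst J = PX" "map_pmf snd J = PY"
proof -
  show "map_pmf fst J = PX"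
  proof (rule pmf_eqI)
    fix x
    have "pmf (map_pmf fst J) x = measure lborel {v\<in>{0..<1}. quantile PX (circ_shift e v) = x}"
      unfolding pmf_map J by (simp add: shifted_quantiles_def vimage_def Int_def conj_commute)
    also have "\<dots> = pmf PX x"
      by (rule quantile_transform[OF circ_shift_preimage_length[OF e] circ_shift_range[OF e]])
    finally show "pmf (map_pmf fst J) x = pmf PX x" .
  qed
  show "map_pmf snd J = PY"
  proof (rule pmf_eqI)
    fix y
    have "pmf (map_pmf snd J) y = measure lborel {v\<in>{0..<1}. quantile PY ((\<lambda>v. v) v) = y}"
      unfolding pmf_map J by (simp add: shifted_quantiles_def vimage_def Int_def conj_commute)
    also have "\<dots> = pmf PY y"
      by (rule quantile_transform[OF unit_subinterval_length]) auto
    finally show "pmf (map_pmf snd J) y = pmf PY y" .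
  qed
qed

text \<open>Off the set {U \<ge> 1 - e}, of probability e, the self-informations of the shifted
  quantiles differ by cfun PX (U + e) - cfun PY U.\<close>
lemma shifted_quantiles_gap:
  assumes e: "0 < e" "e < 1"
    and J: "\<And>A. measure_pmf.prob J A = measure lborel ({0..<1} \<inter> shifted_quantiles PX PY e -` A)"
    and gap: "\<forall>\<delta>\<in>{0..<1-e}. c \<le> cfun PX (\<delta> + e) - cfun PY \<delta>"
  shows "measure_pmf.prob J {(x, y). ln (1 / pmf PX x) - ln (1 / pmf PY y) < c} \<le> e"
proof -
  let ?B = "{(x, y). ln (1 / pmf PX x) - ln (1 / pmf PY y) < c}"
  let ?h = "shifted_quantiles PX PY e"
  have "{0..<1} \<inter> ?h -` ?B \<subseteq> {1-e..<1}"
  proof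
    fix u assume u: "u \<in> {0..<1} \<inter> ?h -` ?B"
    have "\<not> u < 1 - e"
    proof
      assume "u < 1 - e"
      then have "c \<le> cfun PX (u + e) - cfun PY u" using gap u by auto
      moreover have "?h u = (quantile PX (u + e), quantile PY u)"
        using \<open>u < 1 - e\<close> unfolding shifted_quantiles_def circ_shift_def by simp
      ultimately show False using u by (simp add: cfun_eq_quantile)
    qed
    then show "u \<in> {1-e..<1}" using u by auto
  qed
  moreover have "?h -` ?B \<in> sets borel"
    using measurable_sets[OF shifted_quantiles_measurable, of ?B] by simp
  ultimately have "measure lborel ({0..<1} \<inter> ?h -` ?B) \<le> measure lborel {1-e..<1}"
    using e by (intro measure_mono_fmeasurable) (auto intro!: fmeasurableI)
  then show ?thesis using e by (simp add: J)
qed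

lemma shifted_quantile_coupling:
  fixes PX :: "'a pmf" and PY :: "'b pmf"
  assumes e: "0 < e" "e < 1"
  shows "\<exists>J. map_pmf fst J = PX \<and> map_pmf snd J = PY \<and>
    (\<forall>c. (\<forall>\<delta>\<in>{0..<1-e}. c \<le> cfun PX (\<delta> + e) - cfun PY \<delta>) \<longrightarrow>
       measure_pmf.prob J {(x, y). ln (1 / pmf PX x) - ln (1 / pmf PY y) < c} \<le> e)"
proof -
  obtain J where J: "\<And>A. measure_pmf.prob J A
      = measure lborel ({0..<1} \<inter> shifted_quantiles PX PY e -` A)"
    using shifted_quantiles_law[OF e] by blast
  show ?thesis
    using shifted_quantiles_marginals[OF e J] shifted_quantiles_gap[OF e J] by blast
qed

lemma eventually_gap_bounded:
  assumes hyp: "(INF \<epsilon>\<in>{0<..<1::real}.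
             liminf (\<lambda>n. INF \<delta>\<in>{0..<1 - \<epsilon>}.
                 ereal (cfun (PX n) (\<delta> + \<epsilon>) - cfun (PY n) \<delta>))) \<ge> 0"
    and \<epsilon>: "0 < \<epsilon>" "\<epsilon> < 1" and c: "c < 0"
  shows "eventually (\<lambda>n. \<forall>\<delta>\<in>{0..<1 - \<epsilon>}. c \<le> cfun (PX n) (\<delta> + \<epsilon>) - cfun (PY n) \<delta>) sequentially"
proof -
  have "ereal c < 0" using c by simp
  also have "0 \<le> liminf (\<lambda>n. INF \<delta>\<in>{0..<1 - \<epsilon>}. ereal (cfun (PX n) (\<delta> + \<epsilon>) - cfun (PY n) \<delta>))"
    using hyp \<epsilon> by (auto simp: le_INF_iff)
  finally have "ereal c < liminf (\<lambda>n. INF \<delta>\<in>{0..<1 - \<epsilon>}. ereal (cfun (PX n) (\<delta> + \<epsilon>) - cfun (PY n) \<delta>))" .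
  then show ?thesis
    by (rule less_LiminfD[THEN eventually_mono]) (auto dest: less_INF_D)
qed

text \<open>Take e n = 1/(m+2) for the largest m \<le> n for
  which G (1/(m+2)) n holds.\<close>
lemma vanishing_parameter:
  assumes ev: "\<And>\<epsilon>::real. 0 < \<epsilon> \<Longrightarrow> \<epsilon> < 1 \<Longrightarrow> eventually (G \<epsilon>) sequentially"
  shows "\<exists>e. (\<forall>n. 0 < e n \<and> e n < 1) \<and> e \<longlonglongrightarrow> 0 \<and> eventually (\<lambda>n. G (e n) n) sequentially"
proof -
  define ep :: "nat \<Rightarrow> real" where "ep m = 1 / (real m + 2)" for m
  have ep: "0 < ep m" "ep m < 1" for m unfolding ep_def by auto
  have ev_ep: "eventually (G (ep m)) sequentially" for m using ev ep by blast
  define mm where "mm n = (GREATEST m. m \<le> n \<and> G (ep m) n)" for n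
  obtain N0 where N0: "\<And>n. n \<ge> N0 \<Longrightarrow> G (ep 0) n"
    using ev_ep[of 0] by (auto simp: eventually_sequentially)
  have "G (ep (mm n)) n" if "n \<ge> N0" for n
  proof -
    have "mm n \<le> n \<and> G (ep (mm n)) n" unfolding mm_def
      by (rule GreatestI_nat[of _ 0 n]) (use N0[OF that] in auto)
    then show ?thesis by simp
  qed
  then have good: "eventually (\<lambda>n. G (ep (mm n)) n) sequentially"
    unfolding eventually_sequentially by blast
  have mm_big: "eventually (\<lambda>n. M \<le> mm n) sequentially" for M
  proof -
    obtain N where N: "\<And>n. n \<ge> N \<Longrightarrow> G (ep M) n"
      using ev_ep[of M] by (auto simp: eventually_sequentially)
    have "M \<le> mm n" if "max N M \<le> n" for n
      unfolding mm_def using N that by (intro Greatest_le_nat[of _ M n]) auto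
    then show ?thesis unfolding eventually_sequentially by (intro exI[of _ "max N M"]) auto
  qed
  have "(\<lambda>n. ep (mm n)) \<longlonglongrightarrow> 0"
  proof (rule order_tendstoI)
    fix a :: real assume "0 < a"
    then obtain M :: nat where M: "inverse (real (Suc M)) < a" using reals_Archimedean by blast
    have "ep (mm n) < a" if "M \<le> mm n" for n
    proof -
      have "ep (mm n) \<le> inverse (real (Suc M))" using that unfolding ep_def by (simp add: field_simps)
      then show ?thesis using M by simp
    qed
    then show "eventually (\<lambda>n. ep (mm n) < a) sequentially"
      using mm_big[of M] by (auto elim: eventually_mono)
  next
    fix a :: real assume "a < 0"
    then show "eventually (\<lambda>n. a < ep (mm n)) sequentially"
      using ep by (intro always_eventually allI) (meson order.strict_trans)
  qed
  then show ?thesis using ep good by (intro exI[of _ "\<lambda>n. ep (mm n)"]) simp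
qed

lemma normalized_event_subset:
  fixes f :: "'a \<Rightarrow> real" and g :: "'b \<Rightarrow> real"
  assumes "0 < \<gamma>" "1 \<le> real n * \<gamma>"
  shows "{(x, y). (1 / real n) * f x - (1 / real n) * g y < - \<gamma>} \<subseteq> {(x, y). f x - g y < -1}"
proof clarify
  fix x y assume lt: "(1 / real n) * f x - (1 / real n) * g y < - \<gamma>"
  have n: "real n > 0" using assms by (cases n) auto
  have "f x - g y = real n * ((1 / real n) * f x - (1 / real n) * g y)"
    using n by (simp add: field_simps)
  also have "\<dots> < real n * (- \<gamma>)" using lt n by (intro mult_strict_left_mono) auto
  also have "\<dots> \<le> -1" using assms by simp
  finally show "f x - g y < -1" .
qed

lemma normalized_event_vanishes:
  fixes J :: "nat \<Rightarrow> ('a \<times> 'b) pmf" and f :: "nat \<Rightarrow> 'a \<Rightarrow> real" and g :: "nat \<Rightarrow> 'b \<Rightarrow> real"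
  assumes e_lim: "e \<longlonglongrightarrow> 0"
    and bad: "eventually (\<lambda>n. measure_pmf.prob (J n) {(x, y). f n x - g n y < -1} \<le> e n) sequentially"
    and \<gamma>: "0 < \<gamma>"
  shows "(\<lambda>n. measure_pmf.prob (J n) {(x, y). (1 / real n) * f n x - (1 / real n) * g n y < - \<gamma>})
           \<longlonglongrightarrow> 0"
proof (rule tendsto_sandwich[OF _ _ tendsto_const e_lim])
  obtain N :: nat where N: "1 / \<gamma> < real N" using reals_Archimedean2 by blast
  have "1 \<le> real n * \<gamma>" if "N \<le> n" for n
  proof -
    have "1 / \<gamma> < real n" using N that by (meson of_nat_le_iff less_le_trans)
    then show ?thesis using \<gamma> by (simp add: divide_less_eq)
  qed
  then have large: "eventually (\<lambda>n. 1 \<le> real n * \<gamma>) sequentially"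
    by (auto simp: eventually_sequentially)
  show "eventually (\<lambda>n. measure_pmf.prob (J n)
          {(x, y). (1 / real n) * f n x - (1 / real n) * g n y < - \<gamma>} \<le> e n) sequentially"
    using bad large
  proof eventually_elim
    case (elim n)
    have "measure_pmf.prob (J n) {(x, y). (1 / real n) * f n x - (1 / real n) * g n y < - \<gamma>}
        \<le> measure_pmf.prob (J n) {(x, y). f n x - g n y < -1}"
      by (intro measure_pmf.finite_measure_mono normalized_event_subset \<gamma> elim(2)) simp
    also have "\<dots> \<le> e n" by (rule elim(1))
    finally show ?case .
  qed
qed simp

theorem theorem3:
  fixes PX :: "nat \<Rightarrow> 'a pmf" and PY :: "nat \<Rightarrow> 'b pmf"
  assumes "(INF \<epsilon>\<in>{0<..<1::real}.
             liminf (\<lambda>n. INF \<delta>\<in>{0..<1 - \<epsilon>}.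
                 ereal (cfun (PX n) (\<delta> + \<epsilon>) - cfun (PY n) \<delta>))) \<ge> 0"
  shows "\<exists>PXY :: nat \<Rightarrow> ('a \<times> 'b) pmf.
           (\<forall>n. map_pmf fst (PXY n) = PX n \<and> map_pmf snd (PXY n) = PY n) \<and>
           (\<forall>\<gamma>>0. (\<lambda>n. measure_pmf.prob (PXY n)
                {(x, y). (1 / real n) * ln (1 / pmf (PX n) x)
                         - (1 / real n) * ln (1 / pmf (PY n) y) < - \<gamma>})
                \<longlonglongrightarrow> 0)"
proof -
  define gap_ok where
    "gap_ok \<epsilon> n \<longleftrightarrow> (\<forall>\<delta>\<in>{0..<1 - \<epsilon>}. -1 \<le> cfun (PX n) (\<delta> + \<epsilon>) - cfun (PY n) \<delta>)" for \<epsilon> n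
  let ?bad = "\<lambda>n J. measure_pmf.prob J {(x, y). ln (1 / pmf (PX n) x) - ln (1 / pmf (PY n) y) < -1}"
  have "eventually (gap_ok \<epsilon>) sequentially" if "0 < \<epsilon>" "\<epsilon> < 1" for \<epsilon> :: real
    using eventually_gap_bounded[OF assms that] unfolding gap_ok_def by simp
  then obtain e where e: "\<And>n. 0 < e n \<and> e n < 1" and e_lim: "e \<longlonglongrightarrow> 0"
    and gap: "eventually (\<lambda>n. gap_ok (e n) n) sequentially"
    using vanishing_parameter[of gap_ok] by blast
  have "\<exists>J. \<forall>n. (map_pmf fst (J n) = PX n \<and> map_pmf snd (J n) = PY n) \<and>
      (gap_ok (e n) n \<longrightarrow> ?bad n (J n) \<le> e n)"
    using shifted_quantile_coupling e unfolding gap_ok_def by (intro choice allI) blast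
  then obtain J where J_marg: "\<forall>n. map_pmf fst (J n) = PX n \<and> map_pmf snd (J n) = PY n"
    and J_bad: "\<And>n. gap_ok (e n) n \<Longrightarrow> ?bad n (J n) \<le> e n"
    by blast
  have "eventually (\<lambda>n. ?bad n (J n) \<le> e n) sequentially"
    using gap by (rule eventually_mono) (rule J_bad)
  then have "(\<lambda>n. measure_pmf.prob (J n) {(x, y). (1 / real n) * ln (1 / pmf (PX n) x)
                  - (1 / real n) * ln (1 / pmf (PY n) y) < - \<gamma>}) \<longlonglongrightarrow> 0" if "\<gamma> > 0" for \<gamma>
    using normalized_event_vanishes[OF e_lim _ that, where f="\<lambda>n x. ln (1 / pmf (PX n) x)"
        and g="\<lambda>n y. ln (1 / pmf (PY n) y)"] by simp
  then show ?thesis using J_marg by blast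
qed

end
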